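(* Let $d\ge2$, $j\in[d-1]$, $\bar{\mathbf p}$ a $j$-critical direction, $\omega_0=\omega_0(n)=o(\log n)$ a function tending to infinity, and $\tau=1-\frac{1}{\omega_0}$. Then there exists a constant $c>0$ such that for any critical dimension $k\ge j$, with high probability there are at least $\exp(\frac{c\log n}{\omega_0})$ many copies of $M_{j,k}$ in $\mathcal G_\tau=\mathcal G(n,\tau\bar{\mathbf p})$.
   Context: Whp = with probability tending to $1$ as $n\to\infty$. $\mathcal G(n,\mathbf p)$: random complex on $[n]$ in which for each $k\in[d]$ each $(k+1)$-subset is independently an edge with probability $\min\{p_k,1\}$; the complex consists of all singletons and all nonempty subsets of edges. $j$-critical direction: $\bar{\mathbf p}$ is $j$-admissible if for each $1\le k\le d$ there are real constants $\bar\alpha_k,\bar\gamma_k$ and a function $\bar\beta_k(n)$ with $\bar p_k=\frac{\bar\alpha_k\log n+\bar\beta_k}{n^{k-j+\bar\gamma_k}}(k-j)!$ and (A1) at least one of $\bar\alpha_k,\bar\gamma_k$ zero, neither negative; (A2) if $\bar\alpha_k=0$ then $\bar\beta_k\equiv0$ or $\bar\beta_k>0$ with $\bar\beta_k=o(n^\varepsilon)$, $\bar\beta_k=\omega(n^{-\varepsilon})$ for every constant $\varepsilon>0$; (A3) if $\bar\gamma_k=0$ then $|\bar\beta_k|=o(\log n)$; (A4) some $k\in\{j+1,\dots,d\}$ has $\bar\alpha_k>0$. For $j\le k\le d$, $\bar p_k\ne0$: $\bar\lambda_k=j+1-\bar\gamma_k-(k-j+1)\sum_{i=j+1}^d\bar\alpha_i$;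 $\bar\mu_k=-(k-j+1)\sum_{i=j+1}^d\bar\beta_i/n^{\bar\gamma_i}$ plus $0$ if $\bar p_k>1$, $\log\log n$ if $\bar p_k\le1,\bar\alpha_k\ne0$, $\log\bar\beta_k$ if $\bar p_k\le1,\bar\alpha_k=0$; $\bar\nu_k=-\log((j+1)!)$ if $k=j$, $-\log(j!)-\log(k-j+1)+\log\bar\alpha_k$ if $k\ne j,\bar\alpha_k\ne0$, $-\log(j!)-\log(k-j+1)$ otherwise. $j$-critical: $j$-admissible with $\bar\lambda_k\log n+\bar\mu_k+\bar\nu_k\le0$ for all such $k$ and equality for some $k$. A critical dimension is an index $k$ with $j\le k\le d$, $\bar p_k\ne0$, $\bar\lambda_k=0$ and $\bar\mu_k=O(1)$. Copies of $M_{j,k}$: for $j+1\le k\le d$, a pair $(K,C)$ with $K$ a $k$-simplex and $C\subset K$, $|C|=j$, such that every simplex containing some $C\cup\{x\}$, $x\in K\setminus C$, is contained in $K$; for $k=j$, a pair $(K,C)$ with $K$ an isolated $j$-simplex (in no other simplex) and $C$ the first $j$ vertices of $K$ in increasing order. *)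

theory Defs
  imports "HOL-Probability.Probability" "HOL-Library.Landau_Symbols"
begin

definition cand_edges :: "nat \<Rightarrow> nat \<Rightarrow> nat set set" where
  "cand_edges n d = {S. S \<subseteq> {1..n} \<and> 2 \<le> card S \<and> card S \<le> d + 1}"

text \<open>Random edge set: each (k+1)-subset (1 <= k <= d) is independently an edge
  with probability min (q k) 1, where q k is the probability in dimension k.\<close>
definition random_edges :: "nat \<Rightarrow> nat \<Rightarrow> (nat \<Rightarrow> real) \<Rightarrow> nat set set pmf" where
  "random_edges n d q =
     map_pmf (\<lambda>f. {S \<in> cand_edges n d. f S})
       (Pi_pmf (cand_edges n d) False (\<lambda>S. bernoulli_pmf (min (q (card S - 1)) 1)))"

definition complex_of :: "nat \<Rightarrow> nat set set \<Rightarrow> nat set set" where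
  "complex_of n E = {{v} | v. v \<in> {1..n}} \<union> {T. T \<noteq> {} \<and> (\<exists>S\<in>E. T \<subseteq> S)}"

definition first_vertices :: "nat \<Rightarrow> nat set \<Rightarrow> nat set" where
  "first_vertices j K = {x \<in> K. card {y \<in> K. y < x} < j}"

definition copies :: "nat \<Rightarrow> nat \<Rightarrow> nat set set \<Rightarrow> (nat set \<times> nat set) set" where
  "copies j k X =
     (if k = j then
        {(K, C). K \<in> X \<and> card K = j + 1 \<and> (\<forall>L\<in>X. K \<subseteq> L \<longrightarrow> L = K)
                 \<and> C = first_vertices j K}
      else if j < k then
        {(K, C). K \<in> X \<and> card K = k + 1 \<and> C \<subseteq> K \<and> card C = j
                 \<and> (\<forall>x\<in>K - C. \<forall>L\<in>X. insert x C \<subseteq> L \<longrightarrow> L \<subseteq> K)}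
      else {})"

definition pbar :: "nat \<Rightarrow> (nat \<Rightarrow> real) \<Rightarrow> (nat \<Rightarrow> nat \<Rightarrow> real) \<Rightarrow> (nat \<Rightarrow> real)
                    \<Rightarrow> nat \<Rightarrow> nat \<Rightarrow> real" where
  "pbar j al be ga k n =
     (al k * ln (real n) + be k n) / real n powr (real k - real j + ga k) * fact (k - j)"

definition admissible :: "nat \<Rightarrow> nat \<Rightarrow> (nat \<Rightarrow> real) \<Rightarrow> (nat \<Rightarrow> nat \<Rightarrow> real)
                          \<Rightarrow> (nat \<Rightarrow> real) \<Rightarrow> bool" where
  "admissible d j al be ga \<longleftrightarrow>
     (\<forall>k\<in>{1..d}.
        (al k = 0 \<or> ga k = 0) \<and> al k \<ge> 0 \<and> ga k \<ge> 0
      \<and> (al k = 0 \<longrightarrow>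
           be k = (\<lambda>n. 0) \<or>
           ((\<forall>\<^sub>F n in at_top. be k n > 0) \<and>
            (\<forall>\<epsilon>>0. be k \<in> o(\<lambda>n. real n powr \<epsilon>) \<and> be k \<in> \<omega>(\<lambda>n. real n powr (- \<epsilon>)))))
      \<and> (ga k = 0 \<longrightarrow> (\<lambda>n. \<bar>be k n\<bar>) \<in> o(\<lambda>n. ln (real n))))
   \<and> (\<exists>k\<in>{j+1..d}. al k > 0)"

definition lam :: "nat \<Rightarrow> nat \<Rightarrow> (nat \<Rightarrow> real) \<Rightarrow> (nat \<Rightarrow> real) \<Rightarrow> nat \<Rightarrow> real" where
  "lam d j al ga k = real j + 1 - ga k - (real k - real j + 1) * (\<Sum>i\<in>{j+1..d}. al i)"

definition mu :: "nat \<Rightarrow> nat \<Rightarrow> (nat \<Rightarrow> real) \<Rightarrow> (nat \<Rightarrow> nat \<Rightarrow> real)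
                  \<Rightarrow> (nat \<Rightarrow> real) \<Rightarrow> nat \<Rightarrow> nat \<Rightarrow> real" where
  "mu d j al be ga k n =
     - (real k - real j + 1) * (\<Sum>i\<in>{j+1..d}. be i n / real n powr ga i)
     + (if pbar j al be ga k n > 1 then 0
        else if al k \<noteq> 0 then ln (ln (real n)) else ln (be k n))"

definition nu :: "nat \<Rightarrow> (nat \<Rightarrow> real) \<Rightarrow> nat \<Rightarrow> real" where
  "nu j al k =
     (if k = j then - ln (fact (j + 1))
      else if al k \<noteq> 0 then - ln (fact j) - ln (real k - real j + 1) + ln (al k)
      else - ln (fact j) - ln (real k - real j + 1))"

definition crit_expr :: "nat \<Rightarrow> nat \<Rightarrow> (nat \<Rightarrow> real) \<Rightarrow> (nat \<Rightarrow> nat \<Rightarrow> real)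
                        \<Rightarrow> (nat \<Rightarrow> real) \<Rightarrow> nat \<Rightarrow> nat \<Rightarrow> real" where
  "crit_expr d j al be ga k n =
     lam d j al ga k * ln (real n) + mu d j al be ga k n + nu j al k"

definition critical :: "nat \<Rightarrow> nat \<Rightarrow> (nat \<Rightarrow> real) \<Rightarrow> (nat \<Rightarrow> nat \<Rightarrow> real)
                        \<Rightarrow> (nat \<Rightarrow> real) \<Rightarrow> bool" where
  "critical d j al be ga \<longleftrightarrow>
     admissible d j al be ga
   \<and> (\<forall>k\<in>{j..d}. pbar j al be ga k \<noteq> (\<lambda>n. 0) \<longrightarrow>
        (\<forall>\<^sub>F n in at_top. crit_expr d j al be ga k n \<le> 0))
   \<and> (\<exists>k\<in>{j..d}. pbar j al be ga k \<noteq> (\<lambda>n. 0) \<and>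
        (\<forall>\<^sub>F n in at_top. crit_expr d j al be ga k n = 0))"

definition critical_dim :: "nat \<Rightarrow> nat \<Rightarrow> (nat \<Rightarrow> real) \<Rightarrow> (nat \<Rightarrow> nat \<Rightarrow> real)
                            \<Rightarrow> (nat \<Rightarrow> real) \<Rightarrow> nat \<Rightarrow> bool" where
  "critical_dim d j al be ga k \<longleftrightarrow>
     j \<le> k \<and> k \<le> d \<and> pbar j al be ga k \<noteq> (\<lambda>n. 0) \<and> lam d j al ga k = 0
   \<and> mu d j al be ga k \<in> O(\<lambda>n. 1)"

end

theory Submission
  imports Defs "HOL-Real_Asymp.Real_Asymp"
begin

text \<open>
  A copy of M_{j,k} is certified by a configuration (K, C): K is an edge, and none of its
  blockers (the candidate edges through some C + x, x in K - C, that are not contained in K) is.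
  The number X of present configurations bounds the number of copies from below, and X is at
  least half its mean whp by Chebyshev: configurations on different simplices interact only
  through common blockers, which have at least j + 2 vertices and are therefore rare.
  A configuration survives its blockers with probability about exp (-(k + 1 - j) H), where H,
  of order log n, is the expected number of higher edges through a fixed j-simplex. In a critical
  dimension this cost balances the n^(k+1) choices of K and the probability that K is an edge up
  to a bounded factor; thinning by tau = 1 - 1/omega0 lowers the cost by the factor tau and so
  gains exp (H / (2 omega0)) = exp (Omega (log n / omega0)).
\<close>

section \<open>The random complex\<close>

text \<open>An edge with m vertices has dimension m - 1.\<close>
definition edge_prob :: "(nat \<Rightarrow> real) \<Rightarrow> nat \<Rightarrow> real" where
  "edge_prob q m = max 0 (min (q (m - 1)) 1)"

lemma edge_prob_nonneg [simp]: "0 \<le> edge_prob q m"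
  and edge_prob_le_one [simp]: "edge_prob q m \<le> 1"
  by (auto simp: edge_prob_def)

lemma pmf_bernoulli_min_one:
  "pmf (bernoulli_pmf (min x 1)) True = max 0 (min x 1)"
  "pmf (bernoulli_pmf (min x 1)) False = 1 - max 0 (min x 1)"
  by (simp_all add: bernoulli_pmf.rep_eq min.commute max.commute)

lemma finite_cand_edges [simp]: "finite (cand_edges n d)"
  by (rule finite_subset[of _ "Pow {1..n}"]) (auto simp: cand_edges_def)

lemma cand_edges_subset: "S \<in> cand_edges n d \<Longrightarrow> S \<subseteq> {1..n}"
  by (auto simp: cand_edges_def)

lemma finite_cand_edge: "S \<in> cand_edges n d \<Longrightarrow> finite S"
  by (rule finite_subset[OF cand_edges_subset]) simp_all

lemma set_pmf_random_edges: "set_pmf (random_edges n d q) \<subseteq> Pow (cand_edges n d)"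
  by (auto simp: random_edges_def)

lemma finite_set_pmf_random_edges: "finite (set_pmf (random_edges n d q))"
  using set_pmf_random_edges by (rule finite_subset) simp

lemma prod_if_disjoint:
  assumes "finite I" "P \<subseteq> I" "N \<subseteq> I" "P \<inter> N = {}"
  shows "(\<Prod>S\<in>I. if S \<in> P then a S else if S \<in> N then b S else (1::'b::comm_monoid_mult))
           = prod a P * prod b N"
proof -
  let ?f = "\<lambda>S. if S \<in> P then a S else if S \<in> N then b S else 1"
  have "prod ?f I = prod ?f (P \<union> N)"
    using assms by (intro prod.mono_neutral_right) auto
  also have "\<dots> = prod ?f P * prod ?f N"
    using assms by (intro prod.union_disjoint) (auto intro: finite_subset)
  also have "prod ?f P = prod a P"
    by (rule prod.cong) auto
  also have "prod ?f N = prod b N"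
    using assms(4) by (intro prod.cong) auto
  finally show ?thesis .
qed

lemma prob_random_edges_config:
  assumes "P \<subseteq> cand_edges n d" "N \<subseteq> cand_edges n d" "P \<inter> N = {}"
  shows "measure_pmf.prob (random_edges n d q) {E. P \<subseteq> E \<and> E \<inter> N = {}}
           = (\<Prod>S\<in>P. edge_prob q (card S)) * (\<Prod>S\<in>N. 1 - edge_prob q (card S))"
proof -
  let ?I = "cand_edges n d"
  let ?D = "\<lambda>S. bernoulli_pmf (min (q (card S - 1)) 1)"
  define B where "B S = (if S \<in> P then {True} else if S \<in> N then {False} else UNIV)" for S
  have "{f. P \<subseteq> {S \<in> ?I. f S} \<and> {S \<in> ?I. f S} \<inter> N = {}} = Pi ?I B"
    using assms by (auto simp: B_def Pi_def)
  then have "measure_pmf.prob (random_edges n d q) {E. P \<subseteq> E \<and> E \<inter> N = {}}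
        = measure_pmf.prob (Pi_pmf ?I False ?D) (Pi ?I B)"
    by (simp add: random_edges_def)
  also have "\<dots> = (\<Prod>S\<in>?I. measure_pmf.prob (?D S) (B S))"
    by (rule measure_Pi_pmf_Pi) simp
  also have "\<dots> = (\<Prod>S\<in>?I. if S \<in> P then edge_prob q (card S)
                           else if S \<in> N then 1 - edge_prob q (card S) else 1)"
    by (intro prod.cong refl) (auto simp: B_def measure_pmf_single pmf_bernoulli_min_one edge_prob_def)
  also have "\<dots> = (\<Prod>S\<in>P. edge_prob q (card S)) * (\<Prod>S\<in>N. 1 - edge_prob q (card S))"
    using assms by (intro prod_if_disjoint) auto
  finally show ?thesis .
qed

section \<open>The second moment method\<close>

lemma prob_count_less_half_mean:
  fixes M :: "'e pmf" and I :: "'c set" and ev :: "'c \<Rightarrow> 'e \<Rightarrow> bool"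
  assumes fin: "finite (set_pmf M)" "finite I"
    and mean: "\<mu> = (\<Sum>a\<in>I. measure_pmf.prob M {E. ev a E})" and pos: "\<mu> > 0"
    and second: "(\<Sum>a\<in>I. \<Sum>b\<in>I. measure_pmf.prob M {E. ev a E \<and> ev b E}) \<le> V + \<mu>\<^sup>2"
  shows "measure_pmf.prob M {E. real (card {a\<in>I. ev a E}) < \<mu> / 2} \<le> 4 * V / \<mu>\<^sup>2"
proof -
  define X where "X E = (\<Sum>a\<in>I. indicator {E. ev a E} E :: real)" for E
  have int: "integrable (measure_pmf M) f" for f :: "'e \<Rightarrow> real"
    using fin(1) by (rule integrable_measure_pmf_finite)
  have card_X: "real (card {a\<in>I. ev a E}) = X E" for E
    using fin(2) by (simp add: X_def indicator_def sum.If_cases Int_def)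
  have EX: "measure_pmf.expectation M X = \<mu>"
    unfolding X_def mean by (subst Bochner_Integration.integral_sum) (auto intro: int)
  have "(X E)\<^sup>2 = (\<Sum>a\<in>I. \<Sum>b\<in>I. indicator {E. ev a E \<and> ev b E} E)" for E
    by (simp add: X_def power2_eq_square sum_product indicator_inter_arith[symmetric] Collect_conj_eq)
  then have EX2: "measure_pmf.expectation M (\<lambda>E. (X E)\<^sup>2) \<le> V + \<mu>\<^sup>2"
    using second by (simp add: Bochner_Integration.integral_sum int)
  have var: "measure_pmf.variance M X \<le> V"
    using measure_pmf.variance_eq[OF int int, of X] EX EX2 by simp
  have "{E. real (card {a\<in>I. ev a E}) < \<mu> / 2} \<subseteq> {E \<in> space M. \<mu> / 2 \<le> \<bar>X E - \<mu>\<bar>}"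
    by (auto simp: card_X abs_if)
  then have "measure_pmf.prob M {E. real (card {a\<in>I. ev a E}) < \<mu> / 2}
      \<le> measure_pmf.prob M {E \<in> space M. \<mu> / 2 \<le> \<bar>X E - \<mu>\<bar>}"
    by (rule measure_pmf.finite_measure_mono) simp
  also have "\<dots> \<le> measure_pmf.variance M X / (\<mu> / 2)\<^sup>2"
    using measure_pmf.Chebyshev_inequality[where M = M and f = X and a = "\<mu> / 2"] pos
    by (simp add: int EX)
  also have "\<dots> \<le> 4 * V / \<mu>\<^sup>2"
    using var pos by (simp add: power_divide divide_right_mono)
  finally show ?thesis .
qed

section \<open>Configurations\<close>

text \<open>A configuration (K, C) is a candidate copy of M_{j,k}. For k = j the face C is pinned
  down (by removing the largest vertex), so that distinct configurations yield distinct copies.\<close>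
definition configs :: "nat \<Rightarrow> nat \<Rightarrow> nat \<Rightarrow> (nat set \<times> nat set) set" where
  "configs n j k = {(K, C). K \<subseteq> {1..n} \<and> card K = k + 1 \<and> C \<subseteq> K \<and> card C = j
                            \<and> (k = j \<longrightarrow> C = K - {Max K})}"

definition blockers :: "nat \<Rightarrow> nat \<Rightarrow> nat set \<Rightarrow> nat set \<Rightarrow> nat set set" where
  "blockers n d K C = {S \<in> cand_edges n d. (\<exists>x\<in>K - C. insert x C \<subseteq> S) \<and> \<not> S \<subseteq> K}"

definition config_present :: "nat \<Rightarrow> nat \<Rightarrow> nat set \<times> nat set \<Rightarrow> nat set set \<Rightarrow> bool" where
  "config_present n d a E \<longleftrightarrow> fst a \<in> E \<and> E \<inter> blockers n d (fst a) (snd a) = {}"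

lemma configsD:
  assumes "(K, C) \<in> configs n j k"
  shows "K \<subseteq> {1..n}" "card K = k + 1" "C \<subseteq> K" "card C = j" "finite K" "finite C"
proof -
  show "K \<subseteq> {1..n}" "card K = k + 1" "C \<subseteq> K" "card C = j"
    using assms by (auto simp: configs_def)
  then show "finite K" "finite C"
    using finite_subset[of K "{1..n}"] finite_subset[of C K] by auto
qed

lemma finite_configs [simp]: "finite (configs n j k)"
  by (rule finite_subset[of _ "Pow {1..n} \<times> Pow {1..n}"]) (auto simp: configs_def)

lemma config_in_cand_edges:
  assumes "(K, C) \<in> configs n j k" "1 \<le> j" "j \<le> k" "k \<le> d"
  shows "K \<in> cand_edges n d"
  using assms by (auto simp: configs_def cand_edges_def)

lemma blockers_subset_cand_edges: "blockers n d K C \<subseteq> cand_edges n d"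
  by (auto simp: blockers_def)

lemma finite_blockers [simp]: "finite (blockers n d K C)"
  using blockers_subset_cand_edges by (rule finite_subset) simp

lemma not_in_blockers: "K \<notin> blockers n d K C"
  by (auto simp: blockers_def)

lemma card_insert_face:
  assumes "(K, C) \<in> configs n j k" "x \<in> K - C"
  shows "card (insert x C) = j + 1"
  using configsD[OF assms(1)] assms(2) by simp

lemma card_blocker_ge:
  assumes KC: "(K, C) \<in> configs n j k" and S: "S \<in> blockers n d K C"
  shows "j + 2 \<le> card S"
proof -
  obtain x where x: "x \<in> K - C" "insert x C \<subseteq> S" and S': "\<not> S \<subseteq> K" "S \<in> cand_edges n d"
    using S by (auto simp: blockers_def)
  have "insert x C \<subset> S"
    using x S' configsD[OF KC] by auto
  then have "card (insert x C) < card S"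
    using finite_cand_edge[OF S'(2)] by (rule psubset_card_mono[rotated])
  then show ?thesis
    using card_insert_face[OF KC x(1)] by simp
qed

lemma card_blocker_in_range:
  assumes "(K, C) \<in> configs n j k" "S \<in> blockers n d K C"
  shows "card S \<in> {j+2..d+1}"
  using card_blocker_ge[OF assms] assms(2) by (auto simp: blockers_def cand_edges_def)

text \<open>A simplex through C + x lies in an edge through C + x, which lies in K unless it is a
  blocker.\<close>
lemma present_config_closed:
  assumes KC: "(K, C) \<in> configs n j k" and j: "1 \<le> j"
    and E: "E \<subseteq> cand_edges n d" and present: "config_present n d (K, C) E"
    and x: "x \<in> K - C" and L: "L \<in> complex_of n E" "insert x C \<subseteq> L"
  shows "L \<subseteq> K"
proof (cases "\<exists>v. L = {v}")
  case True
  then obtain v where "L = {v}"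
    by blast
  then have "card (insert x C) \<le> card {v}"
    using L(2) by (intro card_mono) auto
  with card_insert_face[OF KC x] j show ?thesis
    by simp
next
  case False
  with L(1) obtain S where S: "S \<in> E" "L \<subseteq> S" by (auto simp: complex_of_def)
  have "S \<notin> blockers n d K C"
    using present S(1) by (auto simp: config_present_def)
  then have "S \<subseteq> K"
    using S E x L(2) by (auto simp: blockers_def)
  with S(2) show ?thesis by simp
qed

definition copy_of_config :: "nat \<Rightarrow> nat \<Rightarrow> nat set \<times> nat set \<Rightarrow> nat set \<times> nat set" where
  "copy_of_config j k a = (fst a, if k = j then first_vertices j (fst a) else snd a)"

lemma copy_of_present_config:
  assumes j: "1 \<le> j" "j \<le> k" "k \<le> d" and KC: "(K, C) \<in> configs n j k"
    and E: "E \<subseteq> cand_edges n d" and present: "config_present n d (K, C) E"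
  shows "copy_of_config j k (K, C) \<in> copies j k (complex_of n E)"
proof -
  note K = configsD[OF KC]
  note closed = present_config_closed[OF KC j(1) E present]
  have "K \<noteq> {}"
    using K(2) by auto
  then have KX: "K \<in> complex_of n E"
    using present by (auto simp: config_present_def complex_of_def)
  show ?thesis
  proof (cases "k = j")
    case True
    then have C: "C = K - {Max K}"
      using KC by (simp add: configs_def)
    have MK: "Max K \<in> K"
      using K(5) \<open>K \<noteq> {}\<close> by simp
    have "L = K" if "L \<in> complex_of n E" "K \<subseteq> L" for L
      using closed[of "Max K" L] that C MK by (auto simp: insert_absorb)
    then show ?thesis
      using True KX K(2) by (simp add: copies_def copy_of_config_def)
  next
    case False
    then show ?thesis
      using j KX K closed by (auto simp: copies_def copy_of_config_def)
  qed
qed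

lemma complex_of_subset_Pow: "E \<subseteq> cand_edges n d \<Longrightarrow> complex_of n E \<subseteq> Pow {1..n}"
  by (auto simp: complex_of_def cand_edges_def)

lemma finite_copies:
  assumes "E \<subseteq> cand_edges n d"
  shows "finite (copies j k (complex_of n E))"
proof -
  have "copies j k (complex_of n E) \<subseteq> Pow {1..n} \<times> Pow {1..n}"
    using complex_of_subset_Pow[OF assms] by (auto simp: copies_def first_vertices_def)
  then show ?thesis
    by (rule finite_subset) simp
qed

lemma config_face_if_equal_dims:
  "a \<in> configs n j j \<Longrightarrow> snd a = fst a - {Max (fst a)}"
  by (cases a) (simp add: configs_def)

lemma inj_on_copy_of_config: "inj_on (copy_of_config j k) (configs n j k)"
proof (rule inj_onI)
  fix a b
  assume a: "a \<in> configs n j k" and b: "b \<in> configs n j k"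
    and eq: "copy_of_config j k a = copy_of_config j k b"
  then have fst_eq: "fst a = fst b"
    by (simp add: copy_of_config_def)
  moreover have "snd a = snd b"
  proof (cases "k = j")
    case True
    then show ?thesis
      using config_face_if_equal_dims a b fst_eq by simp
  next
    case False
    then show ?thesis
      using eq by (simp add: copy_of_config_def)
  qed
  ultimately show "a = b"
    by (simp add: prod_eq_iff)
qed

lemma card_present_configs_le_copies:
  assumes j: "1 \<le> j" "j \<le> k" "k \<le> d" and E: "E \<subseteq> cand_edges n d"
  shows "card {a \<in> configs n j k. config_present n d a E} \<le> card (copies j k (complex_of n E))"
proof (rule card_inj_on_le)
  show "inj_on (copy_of_config j k) {a \<in> configs n j k. config_present n d a E}"
    using inj_on_copy_of_config by (rule inj_on_subset) auto
  show "copy_of_config j k ` {a \<in> configs n j k. config_present n d a E}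
          \<subseteq> copies j k (complex_of n E)"
    using copy_of_present_config[OF j _ E] by auto
  show "finite (copies j k (complex_of n E))"
    using E by (rule finite_copies)
qed

lemma binomial_le_card_configs:
  assumes "j \<le> k"
  shows "n choose (k + 1) \<le> card (configs n j k)"
proof -
  have "{K. K \<subseteq> {1..n} \<and> card K = k + 1} \<subseteq> fst ` configs n j k"
  proof
    fix K assume K: "K \<in> {K. K \<subseteq> {1..n} \<and> card K = k + 1}"
    then have "finite K" "K \<noteq> {}"
      by (auto intro: finite_subset)
    then have "card (K - {Max K}) = k"
      using K by simp
    moreover obtain C where "C \<subseteq> K" "card C = j"
      using obtain_subset_with_card_n[of j K] K assms by auto
    ultimately have "(K, if k = j then K - {Max K} else C) \<in> configs n j k"
      using K by (auto simp: configs_def)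
    then show "K \<in> fst ` configs n j k"
      by force
  qed
  then have "card {K. K \<subseteq> {1..n} \<and> card K = k + 1} \<le> card (fst ` configs n j k)"
    by (intro card_mono) auto
  also have "\<dots> \<le> card (configs n j k)"
    by (rule card_image_le) simp
  finally show ?thesis
    by (simp add: n_subsets)
qed

lemma card_configs_same_simplex:
  assumes "(K, C) \<in> configs n j k"
  shows "card {b \<in> configs n j k. fst b = K} \<le> 2 ^ (k + 1)"
proof -
  have "card {b \<in> configs n j k. fst b = K} \<le> card ({K} \<times> Pow K)"
    using configsD[OF assms] by (intro card_mono) (auto simp: configs_def)
  also have "\<dots> = 2 ^ (k + 1)"
    using configsD[OF assms] by (simp add: card_cartesian_product card_Pow)
  finally show ?thesis .
qed

section \<open>Probabilities of configurations\<close>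

definition superset_bound :: "nat \<Rightarrow> nat \<Rightarrow> (nat \<Rightarrow> real) \<Rightarrow> nat \<Rightarrow> nat \<Rightarrow> real" where
  "superset_bound n d q t a = (\<Sum>m\<in>{a..d+1}. real (n choose (m - t)) * edge_prob q m)"

lemma superset_bound_nonneg: "0 \<le> superset_bound n d q t a"
  unfolding superset_bound_def by (intro sum_nonneg mult_nonneg_nonneg) simp_all

lemma superset_bound_reindex:
  "superset_bound n d q t (j + 2)
     = (\<Sum>i\<in>{j+1..d}. real (n choose (i + 1 - t)) * edge_prob q (i + 1))"
proof -
  have "superset_bound n d q t (Suc (j + 1))
          = (\<Sum>i\<in>{j+1..d}. real (n choose (Suc i - t)) * edge_prob q (Suc i))"
    unfolding superset_bound_def Suc_eq_plus1[of d, symmetric] by (rule sum.shift_bounds_cl_Suc_ivl)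
  then show ?thesis
    by simp
qed

lemma card_supersets_le:
  assumes "finite T"
  shows "card {S \<in> cand_edges n d. T \<subseteq> S \<and> card S = m} \<le> n choose (m - card T)"
proof -
  let ?A = "{S \<in> cand_edges n d. T \<subseteq> S \<and> card S = m}"
  have "inj_on (\<lambda>S. S - T) ?A"
    by (rule inj_onI) (metis (no_types, lifting) Diff_partition mem_Collect_eq)
  moreover have "(\<lambda>S. S - T) ` ?A \<subseteq> {B. B \<subseteq> {1..n} \<and> card B = m - card T}"
    using assms cand_edges_subset by (fastforce simp: card_Diff_subset finite_cand_edge)
  ultimately have "card ?A \<le> card {B. B \<subseteq> {1..n} \<and> card B = m - card T}"
    by (intro card_inj_on_le) auto
  then show ?thesis
    by (simp add: n_subsets)
qed

lemma sum_supersets_le: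
  assumes "finite U" "t \<le> card U"
  shows "(\<Sum>S\<in>{S \<in> cand_edges n d. U \<subseteq> S \<and> a \<le> card S}. edge_prob q (card S))
           \<le> superset_bound n d q t a"
proof -
  obtain T where T: "T \<subseteq> U" "card T = t"
    using obtain_subset_with_card_n[OF assms(2)] by metis
  then have "finite T"
    using assms(1) finite_subset by blast
  let ?A = "{S \<in> cand_edges n d. T \<subseteq> S \<and> a \<le> card S}"
  let ?A\<^sub>m = "\<lambda>m. {S \<in> ?A. card S = m}"
  have "(\<Sum>S\<in>{S \<in> cand_edges n d. U \<subseteq> S \<and> a \<le> card S}. edge_prob q (card S))
          \<le> (\<Sum>S\<in>?A. edge_prob q (card S))"
    using T(1) by (intro sum_mono2) auto
  also have "\<dots> = (\<Sum>m\<in>{a..d+1}. \<Sum>S\<in>?A\<^sub>m m. edge_prob q (card S))"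
    by (rule sum.group[symmetric]) (auto simp: cand_edges_def)
  also have "\<dots> = (\<Sum>m\<in>{a..d+1}. real (card (?A\<^sub>m m)) * edge_prob q m)"
    by (intro sum.cong refl) simp
  also have "\<dots> \<le> (\<Sum>m\<in>{a..d+1}. real (n choose (m - t)) * edge_prob q m)"
  proof (intro sum_mono mult_right_mono)
    fix m
    have "card (?A\<^sub>m m) \<le> card {S \<in> cand_edges n d. T \<subseteq> S \<and> card S = m}"
      by (intro card_mono) auto
    also have "\<dots> \<le> n choose (m - t)"
      using card_supersets_le[OF \<open>finite T\<close>] T(2) by simp
    finally show "real (card (?A\<^sub>m m)) \<le> real (n choose (m - t))"
      by simp
  qed simp
  finally show ?thesis
    by (simp add: superset_bound_def)
qed

lemma sum_le_sum_of_cover: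
  fixes f :: "'a \<Rightarrow> real"
  assumes "finite I" "\<And>i. i \<in> I \<Longrightarrow> finite (B i)" "A \<subseteq> (\<Union>i\<in>I. B i)" "\<And>x. f x \<ge> 0"
  shows "sum f A \<le> (\<Sum>i\<in>I. sum f (B i))"
  using assms(1-3)
proof (induction I arbitrary: A rule: finite_induct)
  case (insert i I)
  have "finite A"
    using insert.prems insert.hyps(1) by (auto intro: finite_subset)
  then have "sum f A = sum f (A \<inter> B i) + sum f (A - B i)"
    by (rule sum.Int_Diff)
  also have "sum f (A \<inter> B i) \<le> sum f (B i)"
    using insert.prems(1) assms(4) by (intro sum_mono2) auto
  also have "sum f (A - B i) \<le> (\<Sum>i\<in>I. sum f (B i))"
    using insert.prems by (intro insert.IH) auto
  finally show ?case
    using insert.hyps by simp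
qed simp

lemma exp_neg_le_one_minus:
  fixes x \<eta> :: real
  assumes "0 \<le> x" "x \<le> \<eta>" "\<eta> < 1"
  shows "exp (- (x / (1 - \<eta>))) \<le> 1 - x"
proof -
  have "0 \<le> x / (1 - x)"
    using assms by simp
  have "exp (- (x / (1 - \<eta>))) \<le> exp (- (x / (1 - x)))"
    using assms by (simp add: frac_le)
  also have "\<dots> = inverse (exp (x / (1 - x)))"
    by (simp add: exp_minus)
  also have "\<dots> \<le> inverse (1 + x / (1 - x))"
    using \<open>0 \<le> x / (1 - x)\<close> by (intro le_imp_inverse_le exp_ge_add_one_self) auto
  also have "\<dots> = 1 - x"
    using assms by (simp add: field_simps)
  finally show ?thesis .
qed

lemma exp_neg_sum_le_prod_one_minus:
  fixes r :: "'a \<Rightarrow> real"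
  assumes "finite N" "\<And>S. S \<in> N \<Longrightarrow> 0 \<le> r S \<and> r S \<le> \<eta>" "\<eta> < 1"
  shows "exp (- sum r N / (1 - \<eta>)) \<le> (\<Prod>S\<in>N. 1 - r S)"
proof -
  have "exp (- sum r N / (1 - \<eta>)) = (\<Prod>S\<in>N. exp (- (r S / (1 - \<eta>))))"
    using assms(1) by (simp add: exp_sum[symmetric] sum_negf sum_divide_distrib)
  also have "\<dots> \<le> (\<Prod>S\<in>N. 1 - r S)"
    using assms exp_neg_le_one_minus by (intro prod_mono) auto
  finally show ?thesis .
qed

lemma prob_config_present:
  assumes KC: "(K, C) \<in> configs n j k" and j: "1 \<le> j" "j \<le> k" "k \<le> d"
  shows "measure_pmf.prob (random_edges n d q) {E. config_present n d (K, C) E}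
         = edge_prob q (k + 1) * (\<Prod>S\<in>blockers n d K C. 1 - edge_prob q (card S))"
proof -
  have "{E. config_present n d (K, C) E} = {E. {K} \<subseteq> E \<and> E \<inter> blockers n d K C = {}}"
    by (auto simp: config_present_def)
  then show ?thesis
    using prob_random_edges_config[of "{K}" n d "blockers n d K C" q] configsD[OF KC]
      config_in_cand_edges[OF KC j] blockers_subset_cand_edges not_in_blockers
    by simp
qed

lemma sum_blockers_le:
  assumes KC: "(K, C) \<in> configs n j k"
  shows "(\<Sum>S\<in>blockers n d K C. edge_prob q (card S))
           \<le> real (k + 1 - j) * superset_bound n d q (j + 1) (j + 2)"
proof -
  let ?B = "\<lambda>x. {S \<in> cand_edges n d. insert x C \<subseteq> S \<and> j + 2 \<le> card S}"
  note K = configsD[OF KC]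
  have "blockers n d K C \<subseteq> (\<Union>x\<in>K - C. ?B x)"
    using card_blocker_ge[OF KC] by (fastforce simp: blockers_def)
  then have "(\<Sum>S\<in>blockers n d K C. edge_prob q (card S))
               \<le> (\<Sum>x\<in>K - C. \<Sum>S\<in>?B x. edge_prob q (card S))"
    using K by (intro sum_le_sum_of_cover) auto
  also have "\<dots> \<le> (\<Sum>x\<in>K - C. superset_bound n d q (j + 1) (j + 2))"
  proof (rule sum_mono)
    fix x assume "x \<in> K - C"
    then show "(\<Sum>S\<in>?B x. edge_prob q (card S)) \<le> superset_bound n d q (j + 1) (j + 2)"
      using sum_supersets_le[where U = "insert x C"] card_insert_face[OF KC] K(6) by simp
  qed
  also have "\<dots> = real (k + 1 - j) * superset_bound n d q (j + 1) (j + 2)"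
    using K by (simp add: card_Diff_subset)
  finally show ?thesis .
qed

lemma prob_config_present_ge:
  assumes KC: "(K, C) \<in> configs n j k" and j: "1 \<le> j" "j \<le> k" "k \<le> d"
    and \<eta>: "\<eta> < 1" "\<forall>m\<in>{j+2..d+1}. edge_prob q m \<le> \<eta>"
  shows "edge_prob q (k + 1)
           * exp (- (real (k + 1 - j) * superset_bound n d q (j + 1) (j + 2)) / (1 - \<eta>))
         \<le> measure_pmf.prob (random_edges n d q) {E. config_present n d (K, C) E}"
proof -
  have "exp (- (real (k + 1 - j) * superset_bound n d q (j + 1) (j + 2)) / (1 - \<eta>))
          \<le> exp (- (\<Sum>S\<in>blockers n d K C. edge_prob q (card S)) / (1 - \<eta>))"
    using sum_blockers_le[OF KC] \<eta>(1) by (simp add: divide_right_mono)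
  also have "\<dots> \<le> (\<Prod>S\<in>blockers n d K C. 1 - edge_prob q (card S))"
    using \<eta> card_blocker_in_range[OF KC] by (intro exp_neg_sum_le_prod_one_minus) auto
  finally show ?thesis
    unfolding prob_config_present[OF KC j] by (intro mult_left_mono) auto
qed

lemma prod_union_le_exp:
  fixes f :: "'a \<Rightarrow> real"
  assumes "finite A" "finite B" "\<And>x. x \<in> A \<union> B \<Longrightarrow> 0 \<le> f x" "exp (- \<delta>) \<le> prod f (A \<inter> B)"
  shows "prod f (A \<union> B) \<le> exp \<delta> * (prod f A * prod f B)"
proof -
  have "prod f (A \<union> B) * exp (- \<delta>) \<le> prod f (A \<union> B) * prod f (A \<inter> B)"
    using assms(3,4) by (intro mult_left_mono prod_nonneg) auto
  also have "\<dots> = prod f A * prod f B"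
    using assms(1,2) by (rule prod.union_inter)
  finally show ?thesis
    by (simp add: exp_minus field_simps)
qed

definition config_mean :: "nat \<Rightarrow> nat \<Rightarrow> nat \<Rightarrow> nat \<Rightarrow> (nat \<Rightarrow> real) \<Rightarrow> real" where
  "config_mean n d j k q =
     (\<Sum>a\<in>configs n j k. measure_pmf.prob (random_edges n d q) {E. config_present n d a E})"

lemma config_mean_ge:
  assumes j: "1 \<le> j" "j \<le> k" "k \<le> d"
    and \<eta>: "\<eta> < 1" "\<forall>m\<in>{j+2..d+1}. edge_prob q m \<le> \<eta>"
  shows "real (n choose (k + 1)) * edge_prob q (k + 1)
           * exp (- (real (k + 1 - j) * superset_bound n d q (j + 1) (j + 2)) / (1 - \<eta>))
         \<le> config_mean n d j k q"
proof -
  let ?lower = "edge_prob q (k + 1)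
                  * exp (- (real (k + 1 - j) * superset_bound n d q (j + 1) (j + 2)) / (1 - \<eta>))"
  have "real (n choose (k + 1)) * ?lower \<le> real (card (configs n j k)) * ?lower"
    using binomial_le_card_configs[OF j(2)] by (intro mult_right_mono) simp_all
  also have "\<dots> = (\<Sum>a\<in>configs n j k. ?lower)"
    by simp
  also have "\<dots> \<le> config_mean n d j k q"
    unfolding config_mean_def using prob_config_present_ge[OF _ j \<eta>]
    by (intro sum_mono) (metis surj_pair)
  finally show ?thesis
    by (simp add: mult.assoc)
qed

lemma thinned_div_one_minus_le:
  fixes B U \<eta> w :: real
  assumes "0 \<le> B" "U \<le> (1 - 1 / w) * B" "0 \<le> \<eta>" "\<eta> \<le> 1 / (2 * w)" "2 \<le> w"
  shows "U / (1 - \<eta>) \<le> (1 - 1 / (2 * w)) * B"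
proof -
  have "1 / (2 * w) \<le> 1 / 4"
    using assms(5) by (simp add: field_simps)
  then have "\<eta> < 1"
    using assms(4) by linarith
  have "1 - 1 / w \<le> (1 - 1 / (2 * w)) * (1 - \<eta>)"
  proof -
    have "(1 - 1 / (2 * w)) * (1 - \<eta>) = 1 - 1 / (2 * w) - \<eta> + \<eta> / (2 * w)"
      using assms(5) by (simp add: field_simps)
    moreover have "0 \<le> \<eta> / (2 * w)" "1 / (2 * w) + 1 / (2 * w) = 1 / w"
      using assms(3,5) by (simp_all add: field_simps)
    ultimately show ?thesis
      using assms(4) by linarith
  qed
  then have "(1 - 1 / w) * B \<le> (1 - 1 / (2 * w)) * (1 - \<eta>) * B"
    using assms(1) by (rule mult_right_mono)
  then have "U \<le> (1 - 1 / (2 * w)) * B * (1 - \<eta>)"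
    using assms(2) by (simp add: algebra_simps)
  then show ?thesis
    using \<open>\<eta> < 1\<close> by (simp add: divide_le_eq)
qed

lemma config_mean_ge_exp:
  assumes j: "1 \<le> j" "j \<le> k" "k \<le> d" and n: "k + 1 \<le> n" and w: "2 \<le> w"
    and \<eta>: "0 \<le> \<eta>" "\<eta> \<le> 1 / (2 * w)" "\<forall>m\<in>{j+2..d+1}. edge_prob q m \<le> \<eta>"
    and B: "0 \<le> B" "real (k + 1 - j) * superset_bound n d q (j + 1) (j + 2) \<le> (1 - 1 / w) * B"
  shows "(real n / real (k + 1)) ^ (k + 1) * edge_prob q (k + 1) * exp (- ((1 - 1 / (2 * w)) * B))
           \<le> config_mean n d j k q"
proof -
  define U where "U = real (k + 1 - j) * superset_bound n d q (j + 1) (j + 2)"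
  have "1 / (2 * w) \<le> 1 / 4"
    using w by (simp add: field_simps)
  then have "\<eta> < 1"
    using \<eta>(2) by linarith
  have "U / (1 - \<eta>) \<le> (1 - 1 / (2 * w)) * B"
    using B \<eta> w by (intro thinned_div_one_minus_le) (simp_all add: U_def)
  then have "exp (- ((1 - 1 / (2 * w)) * B)) \<le> exp (- U / (1 - \<eta>))"
    by simp
  then have "(real n / real (k + 1)) ^ (k + 1) * edge_prob q (k + 1) * exp (- ((1 - 1 / (2 * w)) * B))
               \<le> (real n / real (k + 1)) ^ (k + 1) * edge_prob q (k + 1) * exp (- U / (1 - \<eta>))"
    by (intro mult_left_mono) simp_all
  also have "\<dots> \<le> real (n choose (k + 1)) * edge_prob q (k + 1) * exp (- U / (1 - \<eta>))"
    using binomial_ge_n_over_k_pow_k[of "k + 1" n] n by (intro mult_right_mono) auto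
  also have "\<dots> \<le> config_mean n d j k q"
    using config_mean_ge[OF j \<open>\<eta> < 1\<close> \<eta>(3)] by (simp add: U_def mult.assoc)
  finally show ?thesis .
qed

text \<open>A common blocker of two configurations contains the distinct (j+1)-sets C1 + x and
  C2 + y, hence at least j + 2 vertices: this is what makes common blockers rare.\<close>
lemma card_union_blocked_faces_ge:
  assumes a: "(K1, C1) \<in> configs n j k" and b: "(K2, C2) \<in> configs n j k" and "K1 \<noteq> K2"
    and j: "1 \<le> j" "j \<le> k" "k \<le> d" and not_blocker: "K2 \<notin> blockers n d K1 C1"
    and x: "x \<in> K1 - C1" and y: "y \<in> K2 - C2"
  shows "j + 2 \<le> card (insert x C1 \<union> insert y C2)"
proof -
  note K1 = configsD[OF a] and K2 = configsD[OF b]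
  have "\<not> K2 \<subseteq> K1"
    using K1 K2 \<open>K1 \<noteq> K2\<close> card_subset_eq by metis
  then have "\<not> insert x C1 \<subseteq> K2"
    using not_blocker x config_in_cand_edges[OF b j] by (auto simp: blockers_def)
  moreover have "insert y C2 \<subseteq> K2"
    using K2(3) y by auto
  ultimately have "insert y C2 \<noteq> insert x C1"
    by auto
  then have "\<not> insert y C2 \<subseteq> insert x C1"
    using card_subset_eq[of "insert x C1" "insert y C2"] card_insert_face[OF a x]
      card_insert_face[OF b y] K1(6) by auto
  then have "insert x C1 \<subset> insert x C1 \<union> insert y C2"
    by auto
  then have "card (insert x C1) < card (insert x C1 \<union> insert y C2)"
    using K1(6) K2(6) by (intro psubset_card_mono) auto
  then show ?thesis
    using card_insert_face[OF a x] by simp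
qed

lemma sum_common_blockers_le:
  assumes a: "(K1, C1) \<in> configs n j k" and b: "(K2, C2) \<in> configs n j k" and "K1 \<noteq> K2"
    and j: "1 \<le> j" "j \<le> k" "k \<le> d" and not_blocker: "K2 \<notin> blockers n d K1 C1"
  shows "(\<Sum>S\<in>blockers n d K1 C1 \<inter> blockers n d K2 C2. edge_prob q (card S))
           \<le> real ((k + 1)\<^sup>2) * superset_bound n d q (j + 2) (j + 2)"
proof -
  let ?I = "(K1 - C1) \<times> (K2 - C2)"
  let ?U = "\<lambda>p. insert (fst p) C1 \<union> insert (snd p) C2"
  let ?B = "\<lambda>p. {S \<in> cand_edges n d. ?U p \<subseteq> S \<and> j + 2 \<le> card S}"
  note K1 = configsD[OF a] and K2 = configsD[OF b]
  have "blockers n d K1 C1 \<inter> blockers n d K2 C2 \<subseteq> (\<Union>p\<in>?I. ?B p)"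
    using card_blocker_ge[OF a] by (fastforce simp: blockers_def)
  then have "(\<Sum>S\<in>blockers n d K1 C1 \<inter> blockers n d K2 C2. edge_prob q (card S))
               \<le> (\<Sum>p\<in>?I. \<Sum>S\<in>?B p. edge_prob q (card S))"
    using K1 K2 by (intro sum_le_sum_of_cover) auto
  also have "\<dots> \<le> (\<Sum>p\<in>?I. superset_bound n d q (j + 2) (j + 2))"
  proof (rule sum_mono)
    fix p assume "p \<in> ?I"
    then have "j + 2 \<le> card (?U p)"
      using card_union_blocked_faces_ge[OF a b \<open>K1 \<noteq> K2\<close> j not_blocker] by auto
    then show "(\<Sum>S\<in>?B p. edge_prob q (card S)) \<le> superset_bound n d q (j + 2) (j + 2)"
      using K1(6) K2(6) by (intro sum_supersets_le) auto
  qed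
  also have "\<dots> \<le> real ((k + 1)\<^sup>2) * superset_bound n d q (j + 2) (j + 2)"
  proof -
    have "card ?I \<le> card K1 * card K2"
      unfolding card_cartesian_product using K1 K2 by (intro mult_mono card_mono) auto
    then have "card ?I \<le> (k + 1)\<^sup>2"
      using K1 K2 by (simp add: power2_eq_square)
    then have "real (card ?I) \<le> real ((k + 1)\<^sup>2)"
      by (simp only: of_nat_le_iff)
    then show ?thesis
      using superset_bound_nonneg by (simp add: mult_right_mono)
  qed
  finally show ?thesis .
qed

lemma prob_two_configs_le:
  assumes a: "(K1, C1) \<in> configs n j k" and b: "(K2, C2) \<in> configs n j k" and "K1 \<noteq> K2"
    and j: "1 \<le> j" "j \<le> k" "k \<le> d"
    and half: "\<forall>m\<in>{j+2..d+1}. edge_prob q m \<le> 1/2"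
    and pairs: "real ((k + 1)\<^sup>2) * superset_bound n d q (j + 2) (j + 2) \<le> \<delta> / 2"
  shows "measure_pmf.prob (random_edges n d q)
           {E. config_present n d (K1, C1) E \<and> config_present n d (K2, C2) E}
         \<le> exp \<delta> * (measure_pmf.prob (random_edges n d q) {E. config_present n d (K1, C1) E}
                  * measure_pmf.prob (random_edges n d q) {E. config_present n d (K2, C2) E})"
    (is "?P\<^sub>2 \<le> exp \<delta> * (?P (K1, C1) * ?P (K2, C2))")
proof -
  let ?N1 = "blockers n d K1 C1" and ?N2 = "blockers n d K2 C2"
  let ?f = "\<lambda>S. 1 - edge_prob q (card S)"
  have both: "{E. config_present n d (K1, C1) E \<and> config_present n d (K2, C2) E}
                = {E. {K1, K2} \<subseteq> E \<and> E \<inter> (?N1 \<union> ?N2) = {}}"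
    by (auto simp: config_present_def)
  show ?thesis
  proof (cases "{K1, K2} \<inter> (?N1 \<union> ?N2) = {}")
    case False
    then have empty: "{E. {K1, K2} \<subseteq> E \<and> E \<inter> (?N1 \<union> ?N2) = {}} = {}"
      by blast
    show ?thesis
      unfolding both empty by simp
  next
    case True
    have "?P\<^sub>2 = edge_prob q (k + 1) * edge_prob q (k + 1) * prod ?f (?N1 \<union> ?N2)"
      using prob_random_edges_config[of "{K1, K2}" n d "?N1 \<union> ?N2" q] True \<open>K1 \<noteq> K2\<close>
        config_in_cand_edges[OF a j] config_in_cand_edges[OF b j] blockers_subset_cand_edges
        configsD(2)[OF a] configsD(2)[OF b]
      unfolding both by simp
    also have "\<dots> \<le> edge_prob q (k + 1) * edge_prob q (k + 1) * (exp \<delta> * (prod ?f ?N1 * prod ?f ?N2))"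
    proof (intro mult_left_mono)
      have "K2 \<notin> ?N1"
        using True by blast
      then have "(\<Sum>S\<in>?N1 \<inter> ?N2. edge_prob q (card S)) \<le> \<delta> / 2"
        using sum_common_blockers_le[OF a b \<open>K1 \<noteq> K2\<close> j, of q] pairs by linarith
      then have "exp (- \<delta>) \<le> exp (- (\<Sum>S\<in>?N1 \<inter> ?N2. edge_prob q (card S)) / (1 - 1/2))"
        by simp
      also have "\<dots> \<le> prod ?f (?N1 \<inter> ?N2)"
        using half card_blocker_in_range[OF a] by (intro exp_neg_sum_le_prod_one_minus) auto
      finally show "prod ?f (?N1 \<union> ?N2) \<le> exp \<delta> * (prod ?f ?N1 * prod ?f ?N2)"
        by (intro prod_union_le_exp) auto
    qed simp
    also have "\<dots> = exp \<delta> * (?P (K1, C1) * ?P (K2, C2))"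
      using prob_config_present[OF a j] prob_config_present[OF b j] by simp
    finally show ?thesis .
  qed
qed

lemma second_moment_configs_le:
  assumes j: "1 \<le> j" "j \<le> k" "k \<le> d"
    and half: "\<forall>m\<in>{j+2..d+1}. edge_prob q m \<le> 1/2"
    and pairs: "real ((k + 1)\<^sup>2) * superset_bound n d q (j + 2) (j + 2) \<le> \<delta> / 2"
  shows "(\<Sum>a\<in>configs n j k. \<Sum>b\<in>configs n j k. measure_pmf.prob (random_edges n d q)
            {E. config_present n d a E \<and> config_present n d b E})
         \<le> 2 ^ (k + 1) * config_mean n d j k q + exp \<delta> * (config_mean n d j k q)\<^sup>2"
proof -
  let ?P = "\<lambda>a. measure_pmf.prob (random_edges n d q) {E. config_present n d a E}"
  let ?P\<^sub>2 = "\<lambda>a b. measure_pmf.prob (random_edges n d q)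
                   {E. config_present n d a E \<and> config_present n d b E}"
  let ?\<mu> = "config_mean n d j k q"
  have pair: "?P\<^sub>2 a b \<le> (if fst b = fst a then ?P a else 0) + exp \<delta> * (?P a * ?P b)"
    if a: "a \<in> configs n j k" and b: "b \<in> configs n j k" for a b
  proof (cases "fst b = fst a")
    case True
    have "?P\<^sub>2 a b \<le> ?P a"
      by (intro measure_pmf.finite_measure_mono) auto
    then show ?thesis
      using True by (simp add: add_increasing2)
  next
    case False
    then show ?thesis
      using prob_two_configs_le[OF _ _ _ j half pairs] a b by (cases a, cases b) auto
  qed
  have row: "(\<Sum>b\<in>configs n j k. ?P\<^sub>2 a b) \<le> 2 ^ (k + 1) * ?P a + exp \<delta> * ?P a * ?\<mu>"
    if a: "a \<in> configs n j k" for a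
  proof -
    have "(\<Sum>b\<in>configs n j k. ?P\<^sub>2 a b)
            \<le> (\<Sum>b\<in>configs n j k. (if fst b = fst a then ?P a else 0) + exp \<delta> * (?P a * ?P b))"
      using pair[OF a] by (intro sum_mono) auto
    also have "\<dots> = real (card {b \<in> configs n j k. fst b = fst a}) * ?P a + exp \<delta> * ?P a * ?\<mu>"
      by (simp add: sum.distrib sum_distrib_left sum.If_cases Int_def config_mean_def mult.assoc)
    also have "real (card {b \<in> configs n j k. fst b = fst a}) \<le> 2 ^ (k + 1)"
      using card_configs_same_simplex[of "fst a" "snd a"] a
      by (simp add: of_nat_le_iff[symmetric, where 'a = real])
    finally show ?thesis
      by (simp add: mult_right_mono)
  qed
  have "(\<Sum>a\<in>configs n j k. \<Sum>b\<in>configs n j k. ?P\<^sub>2 a b)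
          \<le> (\<Sum>a\<in>configs n j k. (2 ^ (k + 1) + exp \<delta> * ?\<mu>) * ?P a)"
    using row by (intro sum_mono) (simp add: algebra_simps)
  also have "\<dots> = (2 ^ (k + 1) + exp \<delta> * ?\<mu>) * ?\<mu>"
    by (simp add: sum_distrib_left config_mean_def)
  also have "\<dots> = 2 ^ (k + 1) * ?\<mu> + exp \<delta> * ?\<mu>\<^sup>2"
    by (simp add: power2_eq_square algebra_simps)
  finally show ?thesis .
qed

lemma prob_many_copies_ge:
  assumes j: "1 \<le> j" "j \<le> k" "k \<le> d"
    and half: "\<forall>m\<in>{j+2..d+1}. edge_prob q m \<le> 1/2"
    and pairs: "real ((k + 1)\<^sup>2) * superset_bound n d q (j + 2) (j + 2) \<le> \<delta> / 2"
    and pos: "0 < config_mean n d j k q" and t: "t \<le> config_mean n d j k q / 2"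
  shows "1 - 4 * (2 ^ (k + 1) / config_mean n d j k q + exp \<delta> - 1)
         \<le> measure_pmf.prob (random_edges n d q) {E. t \<le> real (card (copies j k (complex_of n E)))}"
proof -
  let ?M = "random_edges n d q"
  let ?\<mu> = "config_mean n d j k q"
  let ?few = "{E. real (card {a \<in> configs n j k. config_present n d a E}) < ?\<mu> / 2}"
  have "measure_pmf.prob ?M ?few \<le> 4 * (2 ^ (k + 1) * ?\<mu> + (exp \<delta> - 1) * ?\<mu>\<^sup>2) / ?\<mu>\<^sup>2"
    using second_moment_configs_le[OF j half pairs] pos
    by (intro prob_count_less_half_mean finite_set_pmf_random_edges finite_configs)
      (simp_all add: config_mean_def algebra_simps)
  also have "\<dots> = 4 * (2 ^ (k + 1) / ?\<mu> + exp \<delta> - 1)"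
    using pos by (simp add: field_simps power2_eq_square)
  finally have few: "measure_pmf.prob ?M ?few \<le> 4 * (2 ^ (k + 1) / ?\<mu> + exp \<delta> - 1)" .
  have "(UNIV - ?few) \<inter> set_pmf ?M \<subseteq> {E. t \<le> real (card (copies j k (complex_of n E)))}"
  proof
    fix E assume E: "E \<in> (UNIV - ?few) \<inter> set_pmf ?M"
    then have "t \<le> real (card {a \<in> configs n j k. config_present n d a E})"
      using t by auto
    moreover have "E \<subseteq> cand_edges n d"
      using E set_pmf_random_edges by blast
    then have "real (card {a \<in> configs n j k. config_present n d a E})
                 \<le> real (card (copies j k (complex_of n E)))"
      using card_present_configs_le_copies[OF j] by (simp only: of_nat_le_iff)
    ultimately show "E \<in> {E. t \<le> real (card (copies j k (complex_of n E)))}"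
      by simp
  qed
  then have "measure_pmf.prob ?M (UNIV - ?few)
               \<le> measure_pmf.prob ?M {E. t \<le> real (card (copies j k (complex_of n E)))}"
    by (subst measure_Int_set_pmf[symmetric]) (rule measure_pmf.finite_measure_mono, simp_all)
  then show ?thesis
    using few measure_pmf.prob_compl[of ?few ?M] by simp
qed

section \<open>Asymptotics along a critical direction\<close>

text \<open>Since pbar_i = face_degree_i (i-j)! / n^(i-j), face_degree_i is asymptotically the
  expected number of i-edges through a fixed j-simplex.\<close>
definition face_degree :: "(nat \<Rightarrow> real) \<Rightarrow> (nat \<Rightarrow> nat \<Rightarrow> real) \<Rightarrow> (nat \<Rightarrow> real)
                          \<Rightarrow> nat \<Rightarrow> nat \<Rightarrow> real" where
  "face_degree al be ga i n = (al i * ln (real n) + be i n) / real n powr ga i"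

lemma pbar_eq_face_degree:
  assumes "j \<le> i" "n > 0"
  shows "pbar j al be ga i n = face_degree al be ga i n * fact (i - j) / real n ^ (i - j)"
proof -
  have "real n powr (real i - real j + ga i) = real n powr real (i - j) * real n powr ga i"
    using assms(1) by (simp add: powr_add[symmetric])
  also have "real n powr real (i - j) = real n ^ (i - j)"
    using assms(2) by (simp add: powr_realpow)
  finally show ?thesis
    by (simp add: pbar_def face_degree_def field_simps)
qed

lemma edge_prob_thinned_le:
  assumes "j \<le> i" "n > 0" "0 \<le> \<tau>" "0 \<le> face_degree al be ga i n"
  shows "edge_prob (\<lambda>i. \<tau> * pbar j al be ga i n) (i + 1)
           \<le> \<tau> * (face_degree al be ga i n * fact (i - j) / real n ^ (i - j))"
  using assms by (simp add: edge_prob_def pbar_eq_face_degree)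

lemma choose_mul_edge_prob_thinned_le:
  assumes "n > 0" "0 \<le> \<tau>" "j \<le> i" "0 \<le> face_degree al be ga i n"
  shows "real (n choose (i - j)) * edge_prob (\<lambda>i. \<tau> * pbar j al be ga i n) (i + 1)
           \<le> \<tau> * face_degree al be ga i n"
proof -
  define s h where "s = i - j" and "h = face_degree al be ga i n"
  have "real (n choose s) * fact s \<le> real n ^ s"
    using binomial_fact_pow[of n s] by (metis of_nat_fact of_nat_le_iff of_nat_mult of_nat_power)
  then have "\<tau> * h * (real (n choose s) * fact s / real n ^ s) \<le> \<tau> * h * 1"
    using assms by (intro mult_left_mono) (auto simp: h_def)
  moreover have "real (n choose s) * edge_prob (\<lambda>i. \<tau> * pbar j al be ga i n) (i + 1)
                   \<le> real (n choose s) * (\<tau> * (h * fact s / real n ^ s))"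
    using edge_prob_thinned_le[OF assms(3,1,2,4)] by (intro mult_left_mono) (auto simp: s_def h_def)
  ultimately show ?thesis
    by (simp add: s_def h_def field_simps)
qed

lemma edge_prob_thinned_le_fact:
  fixes \<tau> :: real
  assumes n: "n > 0" and \<tau>: "0 \<le> \<tau>" "\<tau> \<le> 1" and i: "j + 1 \<le> i" "i \<le> d"
    and h: "0 \<le> face_degree al be ga i n"
  defines "r \<equiv> edge_prob (\<lambda>i. \<tau> * pbar j al be ga i n) (i + 1)"
  shows "real (n choose (i - j - 1)) * r \<le> fact d * face_degree al be ga i n / real n"
    and "r \<le> fact d * face_degree al be ga i n / real n"
proof -
  define s h N where "s = i - j" and "h = face_degree al be ga i n" and "N = real n"
  have s: "s \<ge> 1" "fact s \<le> (fact d :: real)"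
    using i by (auto simp: s_def intro: fact_mono)
  have N: "N \<ge> 1"
    using n by (simp add: N_def)
  have r: "r \<le> \<tau> * (h * fact s / N ^ s)"
    using edge_prob_thinned_le[of j i n \<tau>] i n \<tau> h by (simp add: r_def s_def h_def N_def)
  have "real (n choose (s - 1)) \<le> N ^ (s - 1)"
    using binomial_fact_pow[of n "s - 1"] unfolding N_def
    by (metis fact_ge_1 le_trans mult_le_cancel1 mult.right_neutral of_nat_le_iff of_nat_power)
  then have "real (n choose (s - 1)) * r \<le> N ^ (s - 1) * (\<tau> * (h * fact s / N ^ s))"
    using r by (intro mult_mono) (auto simp: r_def)
  also have "\<dots> = \<tau> * (h * fact s) / N"
    using N power_Suc2[of N "s - 1"] s(1) by (simp add: field_simps)
  also have "\<dots> \<le> 1 * (h * fact d) / N"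
    using \<tau> h s(2) N by (intro divide_right_mono mult_mono) (auto simp: h_def)
  finally show "real (n choose (i - j - 1)) * r \<le> fact d * face_degree al be ga i n / real n"
    by (simp add: s_def h_def N_def mult.commute)
  have "N \<le> N ^ s"
    using N s(1) by (metis power_increasing power_one_right)
  then have "h * fact s / N ^ s \<le> h * fact d / N"
    using s(2) h N by (intro frac_le mult_mono) (auto simp: h_def)
  then have "\<tau> * (h * fact s / N ^ s) \<le> 1 * (h * fact d / N)"
    using \<tau> h N by (intro mult_mono) (auto simp: h_def)
  then show "r \<le> fact d * face_degree al be ga i n / real n"
    using r by (simp add: h_def N_def mult.commute)
qed

locale admissible_direction =
  fixes d j :: nat and al :: "nat \<Rightarrow> real" and be :: "nat \<Rightarrow> nat \<Rightarrow> real"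
    and ga :: "nat \<Rightarrow> real"
  assumes admissible: "admissible d j al be ga" and j_pos: "1 \<le> j" and j_less: "j < d"
begin

lemma admissibleD:
  assumes "i \<in> {1..d}"
  shows "al i = 0 \<or> ga i = 0" "0 \<le> al i" "0 \<le> ga i"
    and "al i = 0 \<Longrightarrow> be i = (\<lambda>n. 0) \<or>
           ((\<forall>\<^sub>F n in at_top. be i n > 0) \<and> (\<forall>\<epsilon>>0. be i \<in> o(\<lambda>n. real n powr \<epsilon>)))"
    and "ga i = 0 \<Longrightarrow> (\<lambda>n. \<bar>be i n\<bar>) \<in> o(\<lambda>n. ln (real n))"
  using admissible assms unfolding admissible_def by blast+

definition alpha_sum :: real where
  "alpha_sum = (\<Sum>i\<in>{j+1..d}. al i)"

definition total_degree :: "nat \<Rightarrow> real" where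
  "total_degree n = (\<Sum>i\<in>{j+1..d}. face_degree al be ga i n)"

lemma alpha_sum_pos: "0 < alpha_sum"
proof -
  obtain i where "i \<in> {j+1..d}" "al i > 0"
    using admissible by (auto simp: admissible_def)
  moreover have "0 \<le> al i" if "i \<in> {j+1..d}" for i
    using admissibleD(2)[of i] that by auto
  ultimately show ?thesis
    unfolding alpha_sum_def by (intro sum_pos2) auto
qed

lemma face_degree_eq:
  assumes "i \<in> {1..d}"
  shows "face_degree al be ga i n = al i * ln (real n) + be i n / real n powr ga i"
  using admissibleD(1)[OF assms] by (cases "n = 0") (auto simp: face_degree_def add_divide_distrib)

lemma eventually_beta_term_le:
  assumes i: "i \<in> {1..d}" and e: "e > 0"
  shows "\<forall>\<^sub>F n in at_top. \<bar>be i n / real n powr ga i\<bar> \<le> e * ln (real n)"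
proof (cases "ga i = 0")
  case True
  then have "\<forall>\<^sub>F n in at_top. norm \<bar>be i n\<bar> \<le> e * norm (ln (real n))"
    using admissibleD(5)[OF i] e by (intro landau_o.smallD) auto
  moreover have "\<forall>\<^sub>F n in at_top. (n::nat) \<ge> 1"
    by (rule eventually_ge_at_top)
  ultimately show ?thesis
    by eventually_elim (use True in auto)
next
  case False
  then have "al i = 0" "ga i > 0"
    using admissibleD(1-3)[OF i] by auto
  then have "be i \<in> o(\<lambda>n. real n powr ga i)"
    using admissibleD(4)[OF i] by auto
  then have "\<forall>\<^sub>F n in at_top. norm (be i n) \<le> 1 * norm (real n powr ga i)"
    by (rule landau_o.smallD) simp
  moreover have "\<forall>\<^sub>F n in at_top. 1 \<le> e * ln (real n)"
    using e by real_asymp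
  moreover have "\<forall>\<^sub>F n in at_top. (n::nat) \<ge> 1"
    by (rule eventually_ge_at_top)
  ultimately show ?thesis
  proof eventually_elim
    case (elim n)
    then have "\<bar>be i n / real n powr ga i\<bar> \<le> 1"
      by (simp add: abs_div divide_le_eq_1)
    then show ?case
      using elim by linarith
  qed
qed

lemma eventually_face_degree_nonneg:
  "\<forall>\<^sub>F n in at_top. \<forall>i\<in>{1..d}. 0 \<le> face_degree al be ga i n"
proof -
  have "\<forall>\<^sub>F n in at_top. 0 \<le> face_degree al be ga i n" if i: "i \<in> {1..d}" for i
  proof (cases "al i = 0")
    case False
    then have "al i > 0"
      using admissibleD(2)[OF i] by simp
    then have "\<forall>\<^sub>F n in at_top. \<bar>be i n / real n powr ga i\<bar> \<le> al i * ln (real n)"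
      by (rule eventually_beta_term_le[OF i])
    then show ?thesis
    proof eventually_elim
      case (elim n)
      then have "- (be i n / real n powr ga i) \<le> al i * ln (real n)"
        by (meson abs_le_D2)
      then show ?case
        by (simp add: face_degree_eq[OF i])
    qed
  next
    case True
    then have "be i = (\<lambda>n. 0) \<or> (\<forall>\<^sub>F n in at_top. be i n > 0)"
      using admissibleD(4)[OF i] by blast
    then show ?thesis
      using True by (auto simp: face_degree_def elim: eventually_mono)
  qed
  then show ?thesis
    by (simp add: eventually_ball_finite_distrib)
qed

lemma eventually_total_degree_bounds:
  "\<forall>\<^sub>F n in at_top. alpha_sum / 2 * ln (real n) \<le> total_degree n
                    \<and> total_degree n \<le> (alpha_sum + 1) * ln (real n)"
proof -
  define e where "e = min (alpha_sum / 2) 1 / real (card {j+1..d})"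
  have "e > 0"
    using alpha_sum_pos j_less by (simp add: e_def)
  then have "\<forall>i\<in>{j+1..d}. \<forall>\<^sub>F n in at_top. \<bar>be i n / real n powr ga i\<bar> \<le> e * ln (real n)"
    using j_pos eventually_beta_term_le by simp
  then have "\<forall>\<^sub>F n in at_top. \<forall>i\<in>{j+1..d}. \<bar>be i n / real n powr ga i\<bar> \<le> e * ln (real n)"
    by (simp add: eventually_ball_finite_distrib)
  moreover have "\<forall>\<^sub>F n in at_top. (n::nat) \<ge> 1"
    by (rule eventually_ge_at_top)
  ultimately show ?thesis
  proof eventually_elim
    case (elim n)
    define S where "S = (\<Sum>i\<in>{j+1..d}. be i n / real n powr ga i)"
    define m where "m = min (alpha_sum / 2) 1"
    have total: "total_degree n = alpha_sum * ln (real n) + S"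
      using j_pos face_degree_eq
      by (simp add: total_degree_def alpha_sum_def S_def sum.distrib sum_distrib_right)
    have "\<bar>S\<bar> \<le> (\<Sum>i\<in>{j+1..d}. e * ln (real n))"
      unfolding S_def using elim(1) by (intro order_trans[OF sum_abs sum_mono]) auto
    also have "\<dots> = m * ln (real n)"
      using j_less by (simp add: e_def m_def)
    finally have "- (m * ln (real n)) \<le> S" "S \<le> m * ln (real n)"
      by linarith+
    moreover have "m * ln (real n) \<le> alpha_sum / 2 * ln (real n)" "m * ln (real n) \<le> 1 * ln (real n)"
      using elim(2) by (intro mult_right_mono; simp add: m_def)+
    ultimately show ?case
      unfolding total distrib_right by linarith
  qed
qed

definition ln_correction :: "nat \<Rightarrow> nat \<Rightarrow> real" where
  "ln_correction k n =
     (if pbar j al be ga k n > 1 then 0 else if al k \<noteq> 0 then ln (ln (real n)) else ln (be k n))"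

lemma total_degree_at_critical:
  assumes "j \<le> k" "lam d j al ga k = 0"
  shows "real (k + 1 - j) * total_degree n
           = (real j + 1 - ga k) * ln (real n) - mu d j al be ga k n + ln_correction k n"
proof -
  define S where "S = (\<Sum>i\<in>{j+1..d}. be i n / real n powr ga i)"
  have total: "total_degree n = alpha_sum * ln (real n) + S"
    using j_pos face_degree_eq
    by (simp add: total_degree_def alpha_sum_def S_def sum.distrib sum_distrib_right)
  have lam: "real j + 1 - ga k = (real k - real j + 1) * alpha_sum"
    using assms(2) by (simp add: lam_def alpha_sum_def)
  have mu: "mu d j al be ga k n = - (real k - real j + 1) * S + ln_correction k n"
    by (simp add: mu_def S_def ln_correction_def)
  have "real (k + 1 - j) = real k - real j + 1"
    using assms(1) by simp
  then show ?thesis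
    unfolding total lam mu by (simp add: algebra_simps)
qed

lemma eventually_critical_numerator:
  assumes k: "k \<in> {1..d}" and nonzero: "pbar j al be ga k \<noteq> (\<lambda>n. 0)"
  shows "\<forall>\<^sub>F n in at_top. 0 < al k * ln (real n) + be k n
                        \<and> (al k \<noteq> 0 \<longrightarrow> al k / 2 * ln (real n) \<le> al k * ln (real n) + be k n)"
proof (cases "al k = 0")
  case False
  then have "al k > 0" "ga k = 0"
    using admissibleD(1,2)[OF k] by auto
  then have "\<forall>\<^sub>F n in at_top. \<bar>be k n / real n powr ga k\<bar> \<le> al k / 2 * ln (real n)"
    by (intro eventually_beta_term_le[OF k]) auto
  moreover have "\<forall>\<^sub>F n in at_top. 0 < ln (real n)"
    by real_asymp
  ultimately show ?thesis
  proof eventually_elim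
    case (elim n)
    then have "n \<noteq> 0"
      by (intro notI) simp
    then have "\<bar>be k n\<bar> \<le> al k / 2 * ln (real n)"
      using elim(1) \<open>ga k = 0\<close> by simp
    then have "- be k n \<le> al k / 2 * ln (real n)"
      by (simp add: abs_le_iff)
    moreover have "0 < al k * ln (real n)"
      using \<open>al k > 0\<close> elim(2) by simp
    ultimately show ?case
      by simp
  qed
next
  case True
  then have "be k \<noteq> (\<lambda>n. 0)"
    using nonzero by (auto simp: pbar_def fun_eq_iff)
  then have "\<forall>\<^sub>F n in at_top. be k n > 0"
    using admissibleD(4)[OF k True] by blast
  then show ?thesis
    using True by simp
qed

lemma ln_numerator_ge_correction:
  assumes k: "k \<in> {1..d}" and small: "pbar j al be ga k n \<le> 1" and L: "0 < ln (real n)"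
    and X: "0 < al k * ln (real n) + be k n"
      "al k \<noteq> 0 \<longrightarrow> al k / 2 * ln (real n) \<le> al k * ln (real n) + be k n"
  shows "min 0 (if al k \<noteq> 0 then ln (al k / 2) else 0)
           \<le> ln (al k * ln (real n) + be k n) - ln_correction k n"
proof (cases "al k = 0")
  case False
  then have "0 < al k"
    using admissibleD(2)[OF k] by simp
  then have "ln (al k / 2 * ln (real n)) \<le> ln (al k * ln (real n) + be k n)"
    using X False L by simp
  moreover have "ln (al k / 2 * ln (real n)) = ln (al k / 2) + ln (ln (real n))"
    using \<open>0 < al k\<close> L by (intro ln_mult_pos) auto
  ultimately show ?thesis
    using small False by (simp add: ln_correction_def)
qed (use small in \<open>simp add: ln_correction_def\<close>)

lemma ln_thinned_edge_prob_ge: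
  assumes k: "k \<in> {1..d}" "j \<le> k" and \<tau>: "1/2 \<le> \<tau>" "\<tau> \<le> 1" and L: "0 < ln (real n)"
    and X: "0 < al k * ln (real n) + be k n"
      "al k \<noteq> 0 \<longrightarrow> al k / 2 * ln (real n) \<le> al k * ln (real n) + be k n"
  defines "r \<equiv> edge_prob (\<lambda>i. \<tau> * pbar j al be ga i n) (k + 1)"
  shows "0 < r"
    and "min 0 (if al k \<noteq> 0 then ln (al k / 2) else 0) - ln 2
           \<le> (real k - real j + ga k) * ln (real n) + ln r - ln_correction k n"
proof -
  define X E c where "X = al k * ln (real n) + be k n" and "E = real k - real j + ga k"
    and "c = min 0 (if al k \<noteq> 0 then ln (al k / 2) else 0)"
  have "0 < real n"
    using L by (cases "n = 0") auto
  have p: "pbar j al be ga k n = X / real n powr E * fact (k - j)"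
    by (simp add: pbar_def X_def E_def)
  then have "0 < pbar j al be ga k n"
    using X(1) \<open>0 < real n\<close> by (simp add: X_def)
  then have r: "r = min (\<tau> * pbar j al be ga k n) 1"
    using \<tau> by (simp add: r_def edge_prob_def)
  then show "0 < r"
    using \<tau> \<open>0 < pbar j al be ga k n\<close> by simp
  show "c - ln 2 \<le> E * ln (real n) + ln r - ln_correction k n"
  proof (cases "pbar j al be ga k n > 1")
    case True
    then have "\<tau> * 1 \<le> \<tau> * pbar j al be ga k n"
      using \<tau> by (intro mult_left_mono) auto
    then have "1/2 \<le> \<tau> * pbar j al be ga k n"
      using \<tau> by linarith
    then have "1/2 \<le> r"
      unfolding r by simp
    then have "- ln 2 \<le> ln r"
      using ln_le_cancel_iff[of "1/2" r] by (simp add: ln_div)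
    moreover have "0 \<le> E * ln (real n)"
      using k admissibleD(3)[OF k(1)] L by (simp add: E_def)
    ultimately show ?thesis
      using True by (simp add: ln_correction_def c_def)
  next
    case False
    then have "r = \<tau> * pbar j al be ga k n"
      unfolding r using \<tau> \<open>0 < pbar j al be ga k n\<close> by (simp add: mult_le_one)
    then have "ln r = ln \<tau> + ln X - E * ln (real n) + ln (fact (k - j))"
      unfolding p using \<tau> X(1) \<open>0 < real n\<close>
      by (simp add: X_def ln_mult_pos ln_divide_pos ln_powr)
    moreover have "- ln 2 \<le> ln \<tau>"
      using \<tau> ln_le_cancel_iff[of "1/2" \<tau>] by (simp add: ln_div)
    moreover have "c \<le> ln X - ln_correction k n"
      using ln_numerator_ge_correction[OF k(1) _ L X] False by (simp add: c_def X_def)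
    moreover have "0 \<le> ln (fact (k - j) :: real)"
      by simp
    ultimately show ?thesis
      by linarith
  qed
qed

text \<open>The only place where the conditions lam_k = 0 and mu_k = O(1) of a critical dimension
  are used.\<close>
lemma critical_edge_prob_ln_ge:
  assumes crit: "critical_dim d j al be ga k"
    and \<tau>: "\<forall>\<^sub>F n in at_top. 1/2 \<le> \<tau> n \<and> \<tau> n \<le> 1"
  defines "r \<equiv> \<lambda>n. edge_prob (\<lambda>i. \<tau> n * pbar j al be ga i n) (k + 1)"
  shows "\<exists>K. \<forall>\<^sub>F n in at_top. 0 < r n \<and>
           K \<le> real (k + 1) * ln (real n) + ln (r n) - real (k + 1 - j) * total_degree n"
proof -
  have jk: "j \<le> k" "k \<le> d" and nonzero: "pbar j al be ga k \<noteq> (\<lambda>n. 0)"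
    and lam: "lam d j al ga k = 0" and bounded: "mu d j al be ga k \<in> O(\<lambda>n. 1)"
    using crit by (auto simp: critical_dim_def)
  have k: "k \<in> {1..d}"
    using jk j_pos by auto
  obtain M where M: "\<forall>\<^sub>F n in at_top. norm (mu d j al be ga k n) \<le> M * norm (1::real)"
    using bounded by (rule landau_o.bigE)
  define c where "c = min 0 (if al k \<noteq> 0 then ln (al k / 2) else 0)"
  have "\<forall>\<^sub>F n in at_top. 0 < ln (real n)"
    by real_asymp
  then have "\<forall>\<^sub>F n in at_top. 0 < r n \<and>
           c - M - ln 2 \<le> real (k + 1) * ln (real n) + ln (r n) - real (k + 1 - j) * total_degree n"
    using eventually_critical_numerator[OF k nonzero] \<tau> M
  proof eventually_elim
    case (elim n)
    note r = ln_thinned_edge_prob_ge[OF k jk(1) _ _ elim(1) elim(2)[THEN conjunct1]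
        elim(2)[THEN conjunct2], of "\<tau> n", folded c_def]
    have "- M \<le> mu d j al be ga k n"
      using elim(4) by simp
    then show ?case
      using r elim(3) total_degree_at_critical[OF jk(1) lam, of n]
      by (simp add: r_def algebra_simps)
  qed
  then show ?thesis
    by blast
qed

end

locale thinned_direction = admissible_direction +
  fixes \<omega> :: "nat \<Rightarrow> real"
  assumes omega_small: "\<omega> \<in> o(\<lambda>n. ln (real n))"
    and omega_tendsto: "filterlim \<omega> at_top at_top"
begin

definition thinned :: "nat \<Rightarrow> nat \<Rightarrow> real" where
  "thinned n = (\<lambda>i. (1 - 1 / \<omega> n) * pbar j al be ga i n)"

definition eta :: "nat \<Rightarrow> real" where
  "eta n = fact d * (alpha_sum + 1) * ln (real n) / real n"

lemma eventually_omega_ge_2: "\<forall>\<^sub>F n in at_top. 2 \<le> \<omega> n"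
  using omega_tendsto by (simp add: filterlim_at_top)

lemma eventually_omega_le_ln: "\<forall>\<^sub>F n in at_top. \<omega> n \<le> ln (real n)"
proof -
  have "\<forall>\<^sub>F n in at_top. norm (\<omega> n) \<le> 1 * norm (ln (real n))"
    using omega_small by (rule landau_o.smallD) simp
  then show ?thesis
    using eventually_ge_at_top[of 1] by eventually_elim auto
qed

lemma ln_div_omega_tendsto: "filterlim (\<lambda>n. ln (real n) / \<omega> n) at_top at_top"
  unfolding filterlim_at_top
proof
  fix Z :: real
  define M where "M = max Z 1"
  have "M > 0"
    by (simp add: M_def)
  then have "\<forall>\<^sub>F n in at_top. norm (\<omega> n) \<le> (1 / M) * norm (ln (real n))"
    using omega_small by (intro landau_o.smallD) auto
  then show "\<forall>\<^sub>F n in at_top. Z \<le> ln (real n) / \<omega> n"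
    using eventually_omega_ge_2 eventually_ge_at_top[of 1]
  proof eventually_elim
    case (elim n)
    then have "M * \<omega> n \<le> ln (real n)"
      using \<open>M > 0\<close> by (simp add: field_simps)
    then have "M \<le> ln (real n) / \<omega> n"
      using elim by (simp add: field_simps)
    then show ?case
      by (simp add: M_def)
  qed
qed

lemma eta_tendsto_0: "(eta \<longlongrightarrow> 0) at_top"
proof -
  have "((\<lambda>n. C * ln (real n) / real n) \<longlongrightarrow> 0) at_top" for C :: real
    by real_asymp
  then show ?thesis
    unfolding eta_def .
qed

lemma eventually_eta_le: "\<forall>\<^sub>F n in at_top. 0 \<le> eta n \<and> eta n \<le> 1 / (2 * \<omega> n)"
proof -
  have "\<forall>\<^sub>F n in at_top. 2 * C * ln (real n) ^ 2 / real n \<le> 1" for C :: real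
    by real_asymp
  then have "\<forall>\<^sub>F n in at_top. 2 * (fact d * (alpha_sum + 1)) * ln (real n) ^ 2 / real n \<le> 1" .
  then show ?thesis
    using eventually_omega_ge_2 eventually_omega_le_ln eventually_ge_at_top[of 1]
  proof eventually_elim
    case (elim n)
    have "0 \<le> eta n"
      using alpha_sum_pos elim(4) by (simp add: eta_def)
    moreover have "eta n * (2 * \<omega> n) \<le> eta n * (2 * ln (real n))"
      using \<open>0 \<le> eta n\<close> elim(3) by (intro mult_left_mono) auto
    moreover have "eta n * (2 * ln (real n)) = 2 * (fact d * (alpha_sum + 1)) * ln (real n) ^ 2 / real n"
      by (simp add: eta_def power2_eq_square field_simps)
    ultimately show ?case
      using elim(1,2) by (simp add: field_simps)
  qed
qed

lemma eventually_thinning_factor: "\<forall>\<^sub>F n in at_top. 1/2 \<le> 1 - 1 / \<omega> n \<and> 1 - 1 / \<omega> n \<le> 1"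
  using eventually_omega_ge_2 by eventually_elim (simp add: field_simps)

lemma face_degree_le_total_degree:
  assumes "\<forall>i\<in>{1..d}. 0 \<le> face_degree al be ga i n" "i \<in> {j+1..d}"
  shows "face_degree al be ga i n \<le> total_degree n"
  unfolding total_degree_def using assms by (intro member_le_sum) auto

lemma eventually_thinned_edge_prob_le:
  "\<forall>\<^sub>F n in at_top. \<forall>m\<in>{j+2..d+1}. edge_prob (thinned n) m \<le> eta n"
  using eventually_thinning_factor eventually_face_degree_nonneg eventually_total_degree_bounds
    eventually_ge_at_top[of 1]
proof eventually_elim
  case (elim n)
  show ?case
  proof
    fix m assume "m \<in> {j+2..d+1}"
    then obtain i where i: "i \<in> {j+1..d}" "m = i + 1"
      by (intro that[of "m - 1"]) auto
    have "edge_prob (thinned n) m \<le> fact d * face_degree al be ga i n / real n"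
      unfolding i(2) thinned_def
      using edge_prob_thinned_le_fact(2)[of n "1 - 1 / \<omega> n" j i d] elim i j_pos by auto
    also have "\<dots> \<le> fact d * ((alpha_sum + 1) * ln (real n)) / real n"
      using face_degree_le_total_degree[OF elim(2) i(1)] elim(3)
      by (intro divide_right_mono mult_left_mono) auto
    finally show "edge_prob (thinned n) m \<le> eta n"
      by (simp add: eta_def mult.assoc)
  qed
qed

lemma eventually_superset_bound_face_le:
  "\<forall>\<^sub>F n in at_top. superset_bound n d (thinned n) (j + 1) (j + 2) \<le> (1 - 1 / \<omega> n) * total_degree n"
  using eventually_thinning_factor eventually_face_degree_nonneg eventually_ge_at_top[of 1]
proof eventually_elim
  case (elim n)
  have "superset_bound n d (thinned n) (j + 1) (j + 2)
          = (\<Sum>i\<in>{j+1..d}. real (n choose (i - j)) * edge_prob (thinned n) (i + 1))"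
    unfolding superset_bound_reindex by simp
  also have "\<dots> \<le> (\<Sum>i\<in>{j+1..d}. (1 - 1 / \<omega> n) * face_degree al be ga i n)"
    unfolding thinned_def using choose_mul_edge_prob_thinned_le elim
    by (intro sum_mono) auto
  finally show ?case
    by (simp add: total_degree_def sum_distrib_left)
qed

lemma eventually_superset_bound_pair_le:
  "\<forall>\<^sub>F n in at_top. superset_bound n d (thinned n) (j + 2) (j + 2) \<le> eta n"
  using eventually_thinning_factor eventually_face_degree_nonneg eventually_total_degree_bounds
    eventually_ge_at_top[of 1]
proof eventually_elim
  case (elim n)
  have "superset_bound n d (thinned n) (j + 2) (j + 2)
          = (\<Sum>i\<in>{j+1..d}. real (n choose (i - j - 1)) * edge_prob (thinned n) (i + 1))"
    unfolding superset_bound_reindex by simp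
  also have "\<dots> \<le> (\<Sum>i\<in>{j+1..d}. fact d * face_degree al be ga i n / real n)"
    unfolding thinned_def using edge_prob_thinned_le_fact(1) elim j_pos
    by (intro sum_mono) auto
  also have "\<dots> = fact d * total_degree n / real n"
    by (simp add: total_degree_def sum_distrib_left sum_divide_distrib)
  also have "\<dots> \<le> eta n"
    unfolding eta_def using elim(3,4) by (intro divide_right_mono) auto
  finally show ?case .
qed

lemma eventually_config_mean_ge:
  assumes crit: "critical_dim d j al be ga k"
  shows "\<exists>K. \<forall>\<^sub>F n in at_top.
           exp (K + alpha_sum / 4 * (ln (real n) / \<omega> n)) \<le> config_mean n d j k (thinned n)"
proof -
  have jk: "j \<le> k" "k \<le> d"
    using crit by (auto simp: critical_dim_def)
  obtain K where K: "\<forall>\<^sub>F n in at_top. 0 < edge_prob (thinned n) (k + 1) \<and>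
      K \<le> real (k + 1) * ln (real n) + ln (edge_prob (thinned n) (k + 1))
           - real (k + 1 - j) * total_degree n"
    using critical_edge_prob_ln_ge[OF crit eventually_thinning_factor] unfolding thinned_def by blast
  define K' where "K' = K - real (k + 1) * ln (real (k + 1))"
  have "\<forall>\<^sub>F n in at_top.
          exp (K' + alpha_sum / 4 * (ln (real n) / \<omega> n)) \<le> config_mean n d j k (thinned n)"
    using K eventually_thinned_edge_prob_le eventually_superset_bound_face_le eventually_eta_le
      eventually_omega_ge_2 eventually_total_degree_bounds eventually_ge_at_top[of "k + 1"]
  proof eventually_elim
    case (elim n)
    define L r B P where "L = ln (real n)" and "r = edge_prob (thinned n) (k + 1)"
      and "B = real (k + 1 - j) * total_degree n" and "P = (real n / real (k + 1)) ^ (k + 1)"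
    have "0 < r" "0 < P"
      using elim by (simp_all add: r_def P_def)
    have "1 \<le> real (k + 1 - j)"
      using jk by simp
    have "0 \<le> alpha_sum / 2 * L"
      using alpha_sum_pos elim(7) by (simp add: L_def)
    then have "0 \<le> B" "alpha_sum / 2 * L \<le> B"
      using elim(6) mult_right_mono[OF \<open>1 \<le> real (k + 1 - j)\<close>, of "total_degree n"]
      by (simp_all add: B_def L_def)
    have "real (k + 1 - j) * superset_bound n d (thinned n) (j + 1) (j + 2)
            \<le> real (k + 1 - j) * ((1 - 1 / \<omega> n) * total_degree n)"
      using elim(3) by (intro mult_left_mono) auto
    then have "real (k + 1 - j) * superset_bound n d (thinned n) (j + 1) (j + 2) \<le> (1 - 1 / \<omega> n) * B"
      by (simp add: B_def mult.left_commute)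
    then have mean: "P * r * exp (- ((1 - 1 / (2 * \<omega> n)) * B)) \<le> config_mean n d j k (thinned n)"
      unfolding P_def r_def using elim(4)
      by (intro config_mean_ge_exp[OF j_pos jk elim(7,5) _ _ elim(2) \<open>0 \<le> B\<close>]) simp_all
    have "ln P = real (k + 1) * ln (real n / real (k + 1))"
      unfolding P_def by (rule ln_realpow)
    also have "ln (real n / real (k + 1)) = L - ln (real (k + 1))"
      unfolding L_def using elim(7) by (intro ln_divide_pos) auto
    finally have ln_P: "ln P = real (k + 1) * (L - ln (real (k + 1)))" .
    have "alpha_sum / 4 * (L / \<omega> n) \<le> B / (2 * \<omega> n)"
      using \<open>alpha_sum / 2 * L \<le> B\<close> elim(5) by (simp add: field_simps)
    then have "K' + alpha_sum / 4 * (L / \<omega> n) \<le> ln P + ln r - (1 - 1 / (2 * \<omega> n)) * B"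
      using elim(1) ln_P by (simp add: K'_def r_def B_def L_def algebra_simps)
    then have "exp (K' + alpha_sum / 4 * (L / \<omega> n))
                 \<le> exp (ln P + ln r - (1 - 1 / (2 * \<omega> n)) * B)"
      by simp
    also have "\<dots> = P * r * exp (- ((1 - 1 / (2 * \<omega> n)) * B))"
      by (simp only: exp_diff exp_add exp_ln[OF \<open>0 < P\<close>] exp_ln[OF \<open>0 < r\<close>]
          exp_minus divide_inverse)
    finally show ?case
      using mean by (simp add: L_def)
  qed
  then show ?thesis
    by blast
qed

lemma config_mean_tendsto_infinity:
  assumes "critical_dim d j al be ga k"
  obtains K where "\<forall>\<^sub>F n in at_top.
      exp (K + alpha_sum / 4 * (ln (real n) / \<omega> n)) \<le> config_mean n d j k (thinned n)"
    and "filterlim (\<lambda>n. config_mean n d j k (thinned n)) at_top at_top"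
proof -
  obtain K where K: "\<forall>\<^sub>F n in at_top.
      exp (K + alpha_sum / 4 * (ln (real n) / \<omega> n)) \<le> config_mean n d j k (thinned n)"
    using eventually_config_mean_ge[OF assms] by blast
  have "filterlim (\<lambda>n. alpha_sum / 4 * (ln (real n) / \<omega> n)) at_top at_top"
    using alpha_sum_pos
    by (intro filterlim_tendsto_pos_mult_at_top[OF tendsto_const _ ln_div_omega_tendsto]) simp
  then have "filterlim (\<lambda>n. exp (K + alpha_sum / 4 * (ln (real n) / \<omega> n))) at_top at_top"
    by (intro filterlim_compose[OF exp_at_top] filterlim_tendsto_add_at_top[OF tendsto_const])
  then have "filterlim (\<lambda>n. config_mean n d j k (thinned n)) at_top at_top"
    using K by (rule filterlim_at_top_mono)
  with K show ?thesis
    using that by blast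
qed

lemma eventually_prob_many_copies_ge:
  assumes crit: "critical_dim d j al be ga k"
    and mean: "\<forall>\<^sub>F n in at_top.
      exp (K + alpha_sum / 4 * (ln (real n) / \<omega> n)) \<le> config_mean n d j k (thinned n)"
  shows "\<forall>\<^sub>F n in at_top.
    1 - 4 * (2 ^ (k + 1) / config_mean n d j k (thinned n) + exp (2 * real ((k + 1)\<^sup>2) * eta n) - 1)
    \<le> measure_pmf.prob (random_edges n d (thinned n))
         {E. exp (alpha_sum / 8 * ln (real n) / \<omega> n) \<le> real (card (copies j k (complex_of n E)))}"
proof -
  have jk: "j \<le> k" "k \<le> d"
    using crit by (auto simp: critical_dim_def)
  have "\<forall>\<^sub>F n in at_top. (ln 2 - K) * 8 / alpha_sum \<le> ln (real n) / \<omega> n"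
    using ln_div_omega_tendsto by (simp add: filterlim_at_top)
  then show ?thesis
    using mean eventually_thinned_edge_prob_le eventually_superset_bound_pair_le eventually_eta_le
      eventually_omega_ge_2
  proof eventually_elim
    case (elim n)
    define x where "x = ln (real n) / \<omega> n"
    have "1 / (2 * \<omega> n) \<le> 1 / 2"
      using elim(6) by (simp add: field_simps)
    then have half: "\<forall>m\<in>{j+2..d+1}. edge_prob (thinned n) m \<le> 1 / 2"
      using elim(3,5) by force
    have pairs: "real ((k + 1)\<^sup>2) * superset_bound n d (thinned n) (j + 2) (j + 2)
                   \<le> 2 * real ((k + 1)\<^sup>2) * eta n / 2"
      using elim(4) by (simp add: mult_left_mono)
    have "ln 2 + alpha_sum / 8 * x \<le> K + alpha_sum / 4 * x"
      using elim(1) alpha_sum_pos by (simp add: x_def field_simps)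
    then have "2 * exp (alpha_sum / 8 * x) \<le> exp (K + alpha_sum / 4 * x)"
      by (metis exp_add exp_le_cancel_iff exp_ln zero_less_numeral)
    then have "exp (alpha_sum / 8 * ln (real n) / \<omega> n) \<le> config_mean n d j k (thinned n) / 2"
      using elim(2) by (simp add: x_def)
    moreover have "0 < config_mean n d j k (thinned n)"
      using elim(2) by (rule less_le_trans[OF exp_gt_zero])
    ultimately show ?case
      by (intro prob_many_copies_ge[OF j_pos jk half pairs])
  qed
qed

theorem many_copies_whp:
  assumes crit: "critical_dim d j al be ga k"
  shows "((\<lambda>n. measure_pmf.prob (random_edges n d (thinned n))
            {E. real (card (copies j k (complex_of n E))) \<ge> exp (alpha_sum / 8 * ln (real n) / \<omega> n)})
          \<longlongrightarrow> 1) at_top"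
proof -
  let ?\<mu> = "\<lambda>n. config_mean n d j k (thinned n)"
  define err where "err n = 4 * (2 ^ (k + 1) / ?\<mu> n + exp (2 * real ((k + 1)\<^sup>2) * eta n) - 1)" for n
  obtain K where K: "\<forall>\<^sub>F n in at_top. exp (K + alpha_sum / 4 * (ln (real n) / \<omega> n)) \<le> ?\<mu> n"
    and \<mu>: "filterlim ?\<mu> at_top at_top"
    using config_mean_tendsto_infinity[OF crit] by blast
  have "((\<lambda>n. 2 ^ (k + 1) / ?\<mu> n) \<longlongrightarrow> 0) at_top"
    by (intro tendsto_divide_0[OF tendsto_const] filterlim_at_top_imp_at_infinity \<mu>)
  moreover have "((\<lambda>n. 2 * real ((k + 1)\<^sup>2) * eta n) \<longlongrightarrow> 0) at_top"
    using tendsto_mult_right_zero[OF eta_tendsto_0] by simp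
  ultimately have "((\<lambda>n. 1 - err n) \<longlongrightarrow> 1 - 4 * (0 + exp 0 - 1)) at_top"
    unfolding err_def by (intro tendsto_intros)
  then have lim: "((\<lambda>n. 1 - err n) \<longlongrightarrow> 1) at_top"
    by simp
  have "\<forall>\<^sub>F n in at_top. measure_pmf.prob (random_edges n d (thinned n))
      {E. exp (alpha_sum / 8 * ln (real n) / \<omega> n) \<le> real (card (copies j k (complex_of n E)))} \<le> 1"
    by simp
  then show ?thesis
    by (rule tendsto_sandwich[OF eventually_prob_many_copies_ge[OF crit K, folded err_def] _ lim
          tendsto_const])
qed

end

theorem lemma5p7:
  fixes d j :: nat and al ga :: "nat \<Rightarrow> real" and be :: "nat \<Rightarrow> nat \<Rightarrow> real"
    and \<omega>0 :: "nat \<Rightarrow> real"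
  assumes "d \<ge> 2" and "1 \<le> j" and "j \<le> d - 1"
    and "critical d j al be ga"
    and "\<omega>0 \<in> o(\<lambda>n. ln (real n))" and "filterlim \<omega>0 at_top at_top"
  shows "\<exists>c>0. \<forall>k. critical_dim d j al be ga k \<longrightarrow>
           ((\<lambda>n. measure_pmf.prob
                   (random_edges n d (\<lambda>i. (1 - 1 / \<omega>0 n) * pbar j al be ga i n))
                   {E. real (card (copies j k (complex_of n E)))
                         \<ge> exp (c * ln (real n) / \<omega>0 n)}) \<longlongrightarrow> 1) at_top"
proof -
  interpret thinned_direction d j al be ga \<omega>0
    using assms by unfold_locales (auto simp: critical_def)
  show ?thesis
    using alpha_sum_pos many_copies_whp unfolding thinned_def
    by (intro exI[of _ "alpha_sum / 8"]) auto
qed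

end
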